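(* Let $f\in\mathbb{F}[Y,Z]$ and let $g\in\mathbb{F}[Y]$ or $g\in\mathbb{F}[Z]$. Then $\mathrm{maxrank}(M_{fg})\le\mathrm{maxrank}(M_f)$.
   Context: $\mathbb{F}$ is a field, $Y=\{y_1,\dots,y_m\}$ and $Z=\{z_1,\dots,z_m\}$ are disjoint sets of variables. For $f\in\mathbb{F}[Y,Z]$, the polynomial coefficient matrix $M_f$ is the $2^m\times 2^m$ matrix with entries in $\mathbb{F}[Y,Z]$, rows indexed by monic multilinear monomials $p$ in $Y$ and columns by monic multilinear monomials $q$ in $Z$, where $M_f(p,q)=G$ if and only if $f$ can be uniquely written as $f=pq\,G+Q$ with $G$ containing no variable other than those present in $p$ and $q$, and $Q$ having no monomial which is divisible by $pq$ and contains only variables present in $p$ and $q$. For $S:Y\cup Z\to\mathbb{F}$, $M_f|_S$ is obtained by evaluating each entry at $S$, and $\mathrm{maxrank}(M_f)=\max_S\mathrm{rank}(M_f|_S)$. *)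

theory Defs
  imports "HOL-Library.Poly_Mapping" "Jordan_Normal_Form.DL_Rank"
begin

text \<open>Variables: Inl i stands for y_(i+1), Inr i for z_(i+1); only indices i < m are used.\<close>

type_synonym var = "nat + nat"
type_synonym mon = "var \<Rightarrow>\<^sub>0 nat"
type_synonym 'a mpoly = "mon \<Rightarrow>\<^sub>0 'a"

definition Yvars :: "nat \<Rightarrow> var set" where "Yvars m = Inl ` {..<m}"
definition Zvars :: "nat \<Rightarrow> var set" where "Zvars m = Inr ` {..<m}"

definition vars :: "'a::zero mpoly \<Rightarrow> var set" where
  "vars f = (\<Union>\<mu>\<in>Poly_Mapping.keys f. Poly_Mapping.keys \<mu>)"

definition mdvd :: "mon \<Rightarrow> mon \<Rightarrow> bool" where
  "mdvd a b \<longleftrightarrow> (\<forall>v. Poly_Mapping.lookup a v \<le> Poly_Mapping.lookup b v)"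

definition mlmon :: "var set \<Rightarrow> mon" where
  "mlmon V = (\<Sum>v\<in>V. Poly_Mapping.single v 1)"

definition monpoly :: "mon \<Rightarrow> 'a::{zero,one} mpoly" where
  "monpoly \<mu> = Poly_Mapping.single \<mu> 1"

text \<open>Entry M_f(p,q), for p = product of y_i (i in P), q = product of z_j (j in Q):
  the unique G with f = pq G + R, G only in variables of p,q, and R having no monomial
  divisible by pq containing only variables of p,q.\<close>
definition pcm_entry :: "'a::comm_ring_1 mpoly \<Rightarrow> nat set \<Rightarrow> nat set \<Rightarrow> 'a mpoly" where
  "pcm_entry f P Q =
     (let V = Inl ` P \<union> Inr ` Q; pq = mlmon V in
      THE G. vars G \<subseteq> V \<and>
        (\<exists>R. f = monpoly pq * G + R \<and>
             (\<forall>\<mu>\<in>Poly_Mapping.keys R. \<not> (mdvd pq \<mu> \<and> Poly_Mapping.keys \<mu> \<subseteq> V))))"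

definition eval :: "(var \<Rightarrow> 'a::comm_ring_1) \<Rightarrow> 'a mpoly \<Rightarrow> 'a" where
  "eval S f = (\<Sum>\<mu>\<in>Poly_Mapping.keys f. Poly_Mapping.lookup f \<mu> * (\<Prod>v\<in>Poly_Mapping.keys \<mu>. S v ^ Poly_Mapping.lookup \<mu> v))"

text \<open>Index i < 2^m encodes the subset {j < m. bit i j} of {0..<m}; this is a bijection
  between {0..<2^m} and the subsets of {0..<m} (monic multilinear monomials).\<close>
definition idx_set :: "nat \<Rightarrow> nat \<Rightarrow> nat set" where
  "idx_set m i = {j. j < m \<and> bit i j}"

definition pcm_eval :: "nat \<Rightarrow> 'a::field mpoly \<Rightarrow> (var \<Rightarrow> 'a) \<Rightarrow> 'a mat" where
  "pcm_eval m f S = mat (2^m) (2^m)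
     (\<lambda>(i, j). eval S (pcm_entry f (idx_set m i) (idx_set m j)))"

definition maxrank :: "nat \<Rightarrow> 'a::field mpoly \<Rightarrow> nat" where
  "maxrank m f = Max ((\<lambda>S. vec_space.rank (2^m) (pcm_eval m f S)) ` UNIV)"

end

theory Submission
  imports Defs
begin

text \<open>The entry M_f(p,q) is the cofactor of the multilinear monomial pq in f: the polynomial
  whose coefficient at a monomial \<nu> in the variables of pq is the coefficient of pq\<nu> in f.
  Every monomial of a product has as support the union of the supports of its factors, so the
  cofactor of the monomial on V in fg is the sum, over W1 \<union> W2 = V, of the products of the
  cofactors on W1 in f and on W2 in g, times the monomial on W1 \<inter> W2.  If g involves only
  Y-variables, its cofactor on W2 vanishes unless W2 consists of Y-variables, so W1 contains all
  Z-variables of V and the formula says M_fg = A M_f for a matrix A built from g; dually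
  M_fg = M_f A if g involves only Z-variables.  Evaluation is a ring homomorphism, so the
  factorisation survives evaluation at every point, and rank (A B) is at most the rank of
  either factor.\<close>

section \<open>Rank of matrix products\<close>

context vec_space begin

lemma rank_mult_le_left:
  assumes A: "A \<in> carrier_mat n na" and B: "B \<in> carrier_mat na nc"
  shows "rank (A * B) \<le> rank A"
proof -
  have AB: "A * B \<in> carrier_mat n nc" using A B by auto
  define W where "W = span (set (cols A))"
  have colsA: "set (cols A) \<subseteq> carrier_vec n" and colsAB: "set (cols (A * B)) \<subseteq> carrier_vec n"
    using A AB cols_dim by blast+
  have sW: "subspace class_ring W V" unfolding W_def using span_is_subspace colsA by auto
  have "set (cols (A * B)) \<subseteq> W"
  proof
    fix x assume "x \<in> set (cols (A * B))"
    then have "x \<in> col_space (A * B)" unfolding col_space_def using in_own_span colsAB by blast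
    then obtain y where y: "y \<in> carrier_vec nc" "x = (A * B) *\<^sub>v y"
      unfolding col_space_eq[OF AB] using AB by auto
    then have "x = A *\<^sub>v (B *\<^sub>v y)" using A B by (simp add: assoc_mult_mat_vec)
    moreover have "B *\<^sub>v y \<in> carrier_vec (dim_col A)" using B y(1) A by auto
    ultimately have "x \<in> col_space A" unfolding col_space_eq[OF A] using A by auto
    then show "x \<in> W" unfolding W_def col_space_def .
  qed
  then have "span (set (cols (A * B))) \<subseteq> W" using sW by (simp add: span_is_subset)
  then have "subspace class_ring (span (set (cols (A * B)))) (vs W)"
    using nested_subspaces[OF sW span_is_subspace[OF colsAB]] by blast
  moreover have "vectorspace.fin_dim class_ring (vs W)" unfolding W_def
    using fin_dim_span_cols A by auto
  moreover have "vectorspace.fin_dim class_ring (span_vs (set (cols (A * B))))"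
    using AB fin_dim_span_cols by blast
  ultimately show ?thesis unfolding rank_def
    using vectorspace.subspace_dim[OF subspace_is_vs[OF sW]] W_def by auto
qed

lemma lincomb_mult_mat_vec_image:
  assumes A: "A \<in> carrier_mat n n" and U: "finite U" "U \<subseteq> carrier_vec n"
    and inj: "inj_on ((*\<^sub>v) A) U"
  shows "lincomb a ((*\<^sub>v) A ` U) = A *\<^sub>v lincomb (a \<circ> (*\<^sub>v) A) U"
proof (rule eq_vecI)
  have AU: "(*\<^sub>v) A ` U \<subseteq> carrier_vec n" using A U by auto
  show "dim_vec (lincomb a ((*\<^sub>v) A ` U)) = dim_vec (A *\<^sub>v lincomb (a \<circ> (*\<^sub>v) A) U)"
    using lincomb_dim[OF _ AU] U A by auto
  fix i assume "i < dim_vec (A *\<^sub>v lincomb (a \<circ> (*\<^sub>v) A) U)"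
  then have i: "i < n" using A by auto
  have "lincomb a ((*\<^sub>v) A ` U) $ i = (\<Sum>u\<in>U. a (A *\<^sub>v u) * (A *\<^sub>v u) $ i)"
    using lincomb_index[OF i AU] sum.reindex[OF inj] by (simp add: comp_def)
  also have "\<dots> = (\<Sum>u\<in>U. a (A *\<^sub>v u) * (\<Sum>l<n. A $$ (i, l) * u $ l))"
    using i A U by (intro sum.cong) (auto simp: scalar_prod_def lessThan_atLeast0)
  also have "\<dots> = (\<Sum>l<n. A $$ (i, l) * (\<Sum>u\<in>U. a (A *\<^sub>v u) * u $ l))"
    by (simp add: sum_distrib_left sum_distrib_right mult_ac sum.swap[of _ U])
  also have "\<dots> = (A *\<^sub>v lincomb (a \<circ> (*\<^sub>v) A) U) $ i"
    using i A lincomb_index[OF _ U(2)] lincomb_dim[OF U]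
    by (auto simp: scalar_prod_def lessThan_atLeast0 intro!: sum.cong)
  finally show "lincomb a ((*\<^sub>v) A ` U) $ i = (A *\<^sub>v lincomb (a \<circ> (*\<^sub>v) A) U) $ i" .
qed

lemma lin_indpt_if_lin_indpt_image:
  assumes A: "A \<in> carrier_mat n n" and U: "finite U" "U \<subseteq> carrier_vec n"
    and inj: "inj_on ((*\<^sub>v) A) U" and indpt: "lin_indpt ((*\<^sub>v) A ` U)"
  shows "lin_indpt U"
proof
  assume "lin_dep U"
  then obtain a v where a: "a \<in> U \<rightarrow> carrier class_ring" "lincomb a U = 0\<^sub>v n" "v \<in> U" "a v \<noteq> 0"
    using finite_lin_dep[OF U(1) _ U(2)] by auto
  define b where "b = a \<circ> the_inv_into U ((*\<^sub>v) A)"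
  have ba: "(b \<circ> (*\<^sub>v) A) u = a u" if "u \<in> U" for u
    using the_inv_into_f_f[OF inj that] by (simp add: b_def)
  have "lincomb (b \<circ> (*\<^sub>v) A) U = lincomb a U"
    by (rule lincomb_cong) (use U ba in auto)
  then have "lincomb b ((*\<^sub>v) A ` U) = A *\<^sub>v lincomb a U"
    using lincomb_mult_mat_vec_image[OF A U inj] by simp
  also have "\<dots> = 0\<^sub>v n" using a(2) A by auto
  finally have "lin_dep ((*\<^sub>v) A ` U)"
    using lin_dep_crit[OF finite_imageI[OF U(1)] subset_refl, where a=b and v="A *\<^sub>v v"] U a(3,4) ba
    by (auto simp: comp_def)
  then show False using indpt by simp
qed

lemma rank_mult_le_right:
  assumes A: "A \<in> carrier_mat n n" and B: "B \<in> carrier_mat n nc"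
  shows "rank (A * B) \<le> rank B"
proof -
  have AB: "A * B \<in> carrier_mat n nc" using A B by auto
  obtain S where S: "maximal S (\<lambda>T. T \<subseteq> set (cols (A * B)) \<and> lin_indpt T)"
    using maximal_exists[of "\<lambda>T. T \<subseteq> set (cols (A * B)) \<and> lin_indpt T" "card (set (cols (A * B)))" "{}"]
    by (meson List.finite_set card_mono empty_iff empty_subsetI finite_lin_indpt2 rev_finite_subset)
  then have S_cols: "S \<subseteq> set (cols (A * B))" and S_indpt: "lin_indpt S"
    unfolding maximal_def by auto
  have "\<forall>s\<in>S. \<exists>u. u \<in> set (cols B) \<and> A *\<^sub>v u = s"
  proof
    fix s assume "s \<in> S"
    then have "s \<in> set (cols (A * B))" using S_cols by auto
    then obtain j where j: "j < nc" "s = col (A * B) j" using AB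
      by (metis carrier_matD(2) cols_length cols_nth in_set_conv_nth)
    have "col B j \<in> set (cols B)" using j B
      by (metis carrier_matD(2) cols_length cols_nth nth_mem)
    moreover have "A *\<^sub>v col B j = s" using j col_mult2[OF A B] by auto
    ultimately show "\<exists>u. u \<in> set (cols B) \<and> A *\<^sub>v u = s" by auto
  qed
  then obtain c where c: "\<And>s. s \<in> S \<Longrightarrow> c s \<in> set (cols B) \<and> A *\<^sub>v c s = s" by metis
  define U where "U = c ` S"
  have U_cols: "U \<subseteq> set (cols B)" using c U_def by auto
  have "finite S" using S_cols finite_subset by blast
  have AU: "(*\<^sub>v) A ` U = S" unfolding U_def image_image using c by simp
  have inj: "inj_on ((*\<^sub>v) A) U"
  proof (rule inj_onI)
    fix x y assume "x \<in> U" "y \<in> U" "A *\<^sub>v x = A *\<^sub>v y"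
    then show "x = y" unfolding U_def using c by auto
  qed
  have "lin_indpt U"
  proof (rule lin_indpt_if_lin_indpt_image[OF A])
    show "finite U" using \<open>finite S\<close> U_def by simp
    show "U \<subseteq> carrier_vec n" using U_cols cols_dim[of B] B by auto
    show "inj_on ((*\<^sub>v) A) U" by (rule inj)
    show "lin_indpt ((*\<^sub>v) A ` U)" unfolding AU by (rule S_indpt)
  qed
  moreover have "card U = card S" using card_image[OF inj] unfolding AU by simp
  ultimately show ?thesis using rank_card_indpt[OF AB S] rank_ge_card_indpt[OF B U_cols] by simp
qed

end

section \<open>Evaluation of polynomials\<close>

abbreviation lookup :: "('b \<Rightarrow>\<^sub>0 'c::zero) \<Rightarrow> 'b \<Rightarrow> 'c" where "lookup \<equiv> Poly_Mapping.lookup"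
abbreviation keys :: "('b \<Rightarrow>\<^sub>0 'c::zero) \<Rightarrow> 'b set" where "keys \<equiv> Poly_Mapping.keys"
abbreviation single :: "'b \<Rightarrow> 'c::zero \<Rightarrow> 'b \<Rightarrow>\<^sub>0 'c" where "single \<equiv> Poly_Mapping.single"

lemma poly_mapping_sum_single: "f = (\<Sum>\<mu>\<in>keys f. single \<mu> (lookup f \<mu>))"
proof (rule poly_mapping_eqI)
  fix k
  show "lookup f k = lookup (\<Sum>\<mu>\<in>keys f. single \<mu> (lookup f \<mu>)) k"
    by (cases "k \<in> keys f") (auto simp: lookup_sum lookup_single when_def in_keys_iff)
qed

lemma mult_eq_sum_single:
  "f * g = (\<Sum>a\<in>keys f. \<Sum>b\<in>keys g. single (a + b) (lookup f a * lookup g b))"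
  by (subst poly_mapping_sum_single[of f], subst poly_mapping_sum_single[of g])
     (simp add: sum_distrib_left sum_distrib_right mult_single sum.swap[of _ "keys f"])

lemma keys_add_nat: "keys ((a::'b \<Rightarrow>\<^sub>0 nat) + b) = keys a \<union> keys b"
  by (auto simp: in_keys_iff lookup_add)

lemma lookup_single_mult:
  "lookup (single (p::'b \<Rightarrow>\<^sub>0 nat) c * X) k = (if \<exists>\<nu>. k = p + \<nu> then c * lookup X (k - p) else 0)"
proof -
  have "lookup (single p c * X) k = (\<Sum>\<nu>\<in>keys X. c * lookup X \<nu> when p + \<nu> = k)"
    by (subst poly_mapping_sum_single[of X]) (simp add: sum_distrib_left mult_single lookup_sum lookup_single)
  also have "\<dots> = (\<Sum>\<nu>\<in>keys X. if \<nu> = k - p \<and> (\<exists>\<nu>. k = p + \<nu>) then c * lookup X \<nu> else 0)"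
    by (intro sum.cong) (auto simp: when_def)
  also have "\<dots> = (if \<exists>\<nu>. k = p + \<nu> then c * lookup X (k - p) else 0)"
    by (auto simp: in_keys_iff)
  finally show ?thesis .
qed

lemma single_mult_cancel:
  assumes "single (p::'b \<Rightarrow>\<^sub>0 nat) (1::'a::comm_ring_1) * X = single p 1 * Y" shows "X = Y"
proof (rule poly_mapping_eqI)
  fix \<nu> show "lookup X \<nu> = lookup Y \<nu>"
    using arg_cong[OF assms, of "\<lambda>h. lookup h (p + \<nu>)"] by (simp add: lookup_single_mult)
qed

definition eval_mon :: "(var \<Rightarrow> 'a::comm_ring_1) \<Rightarrow> mon \<Rightarrow> 'a" where
  "eval_mon S \<mu> = (\<Prod>v\<in>keys \<mu>. S v ^ lookup \<mu> v)"

lemma eval_mon_superset: "finite K \<Longrightarrow> keys \<mu> \<subseteq> K \<Longrightarrow> eval_mon S \<mu> = (\<Prod>v\<in>K. S v ^ lookup \<mu> v)"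
  unfolding eval_mon_def by (rule prod.mono_neutral_left) (auto simp: in_keys_iff)

lemma eval_mon_add: "eval_mon S (a + b) = eval_mon S a * eval_mon S b"
proof -
  let ?K = "keys a \<union> keys b"
  have "eval_mon S (a + b) = (\<Prod>v\<in>?K. S v ^ lookup a v) * (\<Prod>v\<in>?K. S v ^ lookup b v)"
    by (subst eval_mon_superset[of ?K]) (auto simp: keys_add_nat lookup_add power_add prod.distrib)
  also have "\<dots> = eval_mon S a * eval_mon S b" by (subst (1 2) eval_mon_superset[of ?K]) auto
  finally show ?thesis .
qed

lemma eval_superset:
  "finite K \<Longrightarrow> keys f \<subseteq> K \<Longrightarrow> eval S f = (\<Sum>\<mu>\<in>K. lookup f \<mu> * eval_mon S \<mu>)"
  unfolding eval_def eval_mon_def[symmetric] by (rule sum.mono_neutral_left) (auto simp: in_keys_iff)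

lemma eval_add: "eval S (f + g) = eval S f + eval S g"
proof -
  let ?K = "keys f \<union> keys g"
  have "eval S (f + g) = (\<Sum>\<mu>\<in>?K. lookup f \<mu> * eval_mon S \<mu>) + (\<Sum>\<mu>\<in>?K. lookup g \<mu> * eval_mon S \<mu>)"
    by (subst eval_superset[of ?K]) (use keys_add[of f g] in \<open>auto simp: lookup_add distrib_right sum.distrib\<close>)
  also have "\<dots> = eval S f + eval S g" by (subst (1 2) eval_superset[of ?K]) auto
  finally show ?thesis .
qed

lemma eval_zero [simp]: "eval S 0 = 0"
  by (simp add: eval_def)

lemma eval_sum: "eval S (sum F I) = (\<Sum>i\<in>I. eval S (F i))"
  by (induction I rule: infinite_finite_induct) (auto simp: eval_add)

lemma eval_single: "eval S (single \<mu> c) = c * eval_mon S \<mu>"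
  by (simp add: eval_def eval_mon_def)

lemma eval_mult: "eval S (f * g) = eval S f * eval S g"
proof -
  have "eval S (f * g) = (\<Sum>a\<in>keys f. \<Sum>b\<in>keys g. (lookup f a * eval_mon S a) * (lookup g b * eval_mon S b))"
    by (simp add: mult_eq_sum_single eval_sum eval_single eval_mon_add mult_ac)
  also have "\<dots> = eval S f * eval S g"
    by (simp add: eval_def eval_mon_def[symmetric] sum_product)
  finally show ?thesis .
qed

section \<open>Cofactors of multilinear monomials\<close>

lift_definition support_part :: "var set \<Rightarrow> 'a::zero mpoly \<Rightarrow> 'a mpoly" is
  "\<lambda>W f \<mu>. if Poly_Mapping.keys \<mu> = W then f \<mu> else 0"
  by (rule finite_subset[rotated]) auto

lift_definition mono_cofactor :: "var set \<Rightarrow> 'a::zero mpoly \<Rightarrow> 'a mpoly" is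
  "\<lambda>W f \<nu>. if Poly_Mapping.keys \<nu> \<subseteq> W then f (\<nu> + mlmon W) else 0"
proof -
  fix W and f :: "mon \<Rightarrow> 'a" assume "finite {\<mu>. f \<mu> \<noteq> 0}"
  moreover have "{\<nu>. (if Poly_Mapping.keys \<nu> \<subseteq> W then f (\<nu> + mlmon W) else 0) \<noteq> 0}
     \<subseteq> (\<lambda>\<mu>. \<mu> - mlmon W) ` {\<mu>. f \<mu> \<noteq> 0}"
    by (auto split: if_splits intro!: image_eqI[of _ _ "_ + mlmon W"])
  ultimately show "finite {\<nu>. (if Poly_Mapping.keys \<nu> \<subseteq> W then f (\<nu> + mlmon W) else 0) \<noteq> 0}"
    by (meson finite_imageI finite_subset)
qed

lemma lookup_support_part: "lookup (support_part W f) \<mu> = (if keys \<mu> = W then lookup f \<mu> else 0)"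
  by transfer simp

lemma lookup_mono_cofactor: "lookup (mono_cofactor W f) \<nu> = (if keys \<nu> \<subseteq> W then lookup f (\<nu> + mlmon W) else 0)"
  by transfer simp

lemma support_part_add: "support_part W (f + g) = support_part W f + support_part W g"
  by (rule poly_mapping_eqI) (simp add: lookup_support_part lookup_add)

lemma support_part_sum: "support_part W (sum F I) = (\<Sum>i\<in>I. support_part W (F i))"
  by (induction I rule: infinite_finite_induct)
     (auto simp: support_part_add poly_mapping_eqI lookup_support_part)

lemma lookup_mlmon: "finite V \<Longrightarrow> lookup (mlmon V) v = (if v \<in> V then 1 else 0)"
  unfolding mlmon_def by (simp add: lookup_sum lookup_single when_def)

lemma keys_mlmon: "finite V \<Longrightarrow> keys (mlmon V) = V"
  by (auto simp: in_keys_iff lookup_mlmon split: if_splits)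

lemma mlmon_add_mlmon:
  "finite W1 \<Longrightarrow> finite W2 \<Longrightarrow> mlmon W1 + mlmon W2 = mlmon (W1 \<union> W2) + mlmon (W1 \<inter> W2)"
  by (rule poly_mapping_eqI) (auto simp: lookup_add lookup_mlmon)

lemma mdvd_mlmon_iff: "finite V \<Longrightarrow> keys \<mu> \<subseteq> V \<Longrightarrow> mdvd (mlmon V) \<mu> \<longleftrightarrow> keys \<mu> = V"
  unfolding mdvd_def by (auto simp: lookup_mlmon in_keys_iff split: if_splits)

lemma keys_subset_vars: "\<nu> \<in> keys G \<Longrightarrow> keys \<nu> \<subseteq> vars G"
  unfolding vars_def by auto

lemma ex_add_mlmon_iff:
  assumes "finite V" shows "(\<exists>\<nu>. k = mlmon V + \<nu>) \<longleftrightarrow> V \<subseteq> keys k"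
proof
  assume "V \<subseteq> keys k"
  then have "k = mlmon V + (k - mlmon V)"
    using assms by (intro poly_mapping_eqI) (auto simp: lookup_add lookup_minus lookup_mlmon in_keys_iff)
  then show "\<exists>\<nu>. k = mlmon V + \<nu>" ..
qed (use assms in \<open>auto simp: keys_add_nat keys_mlmon\<close>)

lemma monpoly_mlmon_mult_mono_cofactor:
  fixes h :: "'a::comm_ring_1 mpoly" assumes V: "finite V"
  shows "monpoly (mlmon V) * mono_cofactor V h = support_part V h"
proof (rule poly_mapping_eqI)
  fix k
  show "lookup (monpoly (mlmon V) * mono_cofactor V h) k = lookup (support_part V h) k"
  proof (cases "V \<subseteq> keys k")
    case True
    then obtain \<nu> where k: "k = mlmon V + \<nu>" using ex_add_mlmon_iff[OF V] by blast
    then have "keys k = V \<longleftrightarrow> keys \<nu> \<subseteq> V" using V by (auto simp: keys_add_nat keys_mlmon)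
    then show ?thesis unfolding monpoly_def lookup_single_mult
      by (auto simp: k lookup_mono_cofactor lookup_support_part add.commute)
  next
    case False
    then show ?thesis unfolding monpoly_def lookup_single_mult ex_add_mlmon_iff[OF V]
      by (auto simp: lookup_support_part)
  qed
qed

lemma mono_cofactor_unique:
  fixes h G R :: "'a::comm_ring_1 mpoly"
  assumes V: "finite V" and G: "vars G \<subseteq> V" and h: "h = monpoly (mlmon V) * G + R"
    and R: "\<forall>\<mu>\<in>keys R. \<not> (mdvd (mlmon V) \<mu> \<and> keys \<mu> \<subseteq> V)"
  shows "G = mono_cofactor V h"
proof -
  have "support_part V R = 0"
  proof (rule poly_mapping_eqI)
    fix \<mu>
    have "lookup R \<mu> = 0" if "keys \<mu> = V"
      using R mdvd_mlmon_iff[OF V, of \<mu>] that by (auto simp: in_keys_iff)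
    then show "lookup (support_part V R) \<mu> = lookup 0 \<mu>" by (simp add: lookup_support_part)
  qed
  moreover have "support_part V (monpoly (mlmon V) * G) = monpoly (mlmon V) * G"
  proof (rule poly_mapping_eqI)
    fix k
    have "keys k = V" if "k = mlmon V + \<nu>" "\<nu> \<in> keys G" for \<nu>
      using that keys_subset_vars[of \<nu> G] G V by (auto simp: keys_add_nat keys_mlmon)
    then show "lookup (support_part V (monpoly (mlmon V) * G)) k = lookup (monpoly (mlmon V) * G) k"
      unfolding monpoly_def lookup_single_mult lookup_support_part by (auto simp: in_keys_iff)
  qed
  ultimately have "monpoly (mlmon V) * G = monpoly (mlmon V) * mono_cofactor V h"
    using h by (simp add: support_part_add monpoly_mlmon_mult_mono_cofactor[OF V])
  then show ?thesis unfolding monpoly_def by (rule single_mult_cancel)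
qed

lemma mono_cofactor_decomposition:
  fixes h :: "'a::comm_ring_1 mpoly"
  assumes V: "finite V"
  shows "vars (mono_cofactor V h) \<subseteq> V"
    and "\<forall>\<mu>\<in>keys (h - monpoly (mlmon V) * mono_cofactor V h). \<not> (mdvd (mlmon V) \<mu> \<and> keys \<mu> \<subseteq> V)"
proof -
  have "keys \<nu> \<subseteq> V" if "\<nu> \<in> keys (mono_cofactor V h)" for \<nu>
    using that by (auto simp: in_keys_iff lookup_mono_cofactor split: if_splits)
  then show "vars (mono_cofactor V h) \<subseteq> V" unfolding vars_def by blast
  show "\<forall>\<mu>\<in>keys (h - monpoly (mlmon V) * mono_cofactor V h). \<not> (mdvd (mlmon V) \<mu> \<and> keys \<mu> \<subseteq> V)"
    using mdvd_mlmon_iff[OF V]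
    by (auto simp: in_keys_iff monpoly_mlmon_mult_mono_cofactor[OF V] lookup_minus lookup_support_part)
qed

lemma pcm_entry_eq_mono_cofactor:
  assumes "finite P" "finite Q"
  shows "pcm_entry h P Q = mono_cofactor (Inl ` P \<union> Inr ` Q) h"
proof -
  have V: "finite (Inl ` P \<union> Inr ` Q)" using assms by simp
  show ?thesis unfolding pcm_entry_def Let_def
  proof (rule the_equality)
    show "vars (mono_cofactor (Inl ` P \<union> Inr ` Q) h) \<subseteq> Inl ` P \<union> Inr ` Q \<and>
      (\<exists>R. h = monpoly (mlmon (Inl ` P \<union> Inr ` Q)) * mono_cofactor (Inl ` P \<union> Inr ` Q) h + R \<and>
        (\<forall>\<mu>\<in>keys R. \<not> (mdvd (mlmon (Inl ` P \<union> Inr ` Q)) \<mu> \<and> keys \<mu> \<subseteq> Inl ` P \<union> Inr ` Q)))"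
      using mono_cofactor_decomposition[OF V, of h] by (auto intro!: exI[of _ "h - _"])
  qed (use mono_cofactor_unique[OF V] in blast)
qed

section \<open>Cofactors of a product\<close>

lemma support_part_eq_self: "(\<And>\<mu>. \<mu> \<in> keys h \<Longrightarrow> keys \<mu> = V) \<Longrightarrow> support_part V h = h"
  by (rule poly_mapping_eqI) (metis in_keys_iff lookup_support_part)

lemma support_part_eq_0: "(\<And>\<mu>. \<mu> \<in> keys h \<Longrightarrow> keys \<mu> \<noteq> V) \<Longrightarrow> support_part V h = 0"
  by (rule poly_mapping_eqI) (metis in_keys_iff lookup_support_part lookup_zero)

lemma keys_mult_support_part:
  assumes "\<mu> \<in> keys (support_part W1 f * support_part W2 g)"
  shows "keys \<mu> = W1 \<union> W2"
proof -
  obtain a b where "\<mu> = a + b" "a \<in> keys (support_part W1 f)" "b \<in> keys (support_part W2 g)"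
    using keys_mult assms by blast
  then show ?thesis by (auto simp: keys_add_nat in_keys_iff lookup_support_part split: if_splits)
qed

lemma support_part_mult_support_part:
  "support_part V (support_part W1 f * support_part W2 g)
     = (if W1 \<union> W2 = V then support_part W1 f * support_part W2 g else 0)"
  using keys_mult_support_part support_part_eq_self support_part_eq_0 by metis

lemma sum_support_part:
  assumes "finite K" "vars f \<subseteq> K"
  shows "(\<Sum>W\<in>Pow K. support_part W f) = f"
proof (rule poly_mapping_eqI)
  fix \<mu>
  have "keys \<mu> \<in> Pow K" if "lookup f \<mu> \<noteq> 0"
    using that assms(2) keys_subset_vars[of \<mu> f] by (auto simp: in_keys_iff)
  then show "lookup (\<Sum>W\<in>Pow K. support_part W f) \<mu> = lookup f \<mu>"
    using assms(1) by (auto simp: lookup_sum lookup_support_part)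
qed

lemma support_part_mult:
  fixes f g :: "'a::comm_ring_1 mpoly"
  assumes "finite V"
  shows "support_part V (f * g) = (\<Sum>W1\<in>Pow V. \<Sum>W2\<in>Pow V.
           if W1 \<union> W2 = V then support_part W1 f * support_part W2 g else 0)"
proof -
  define K where "K = V \<union> vars f \<union> vars g"
  have K: "finite K" "V \<subseteq> K" "vars f \<subseteq> K" "vars g \<subseteq> K"
    using assms by (auto simp: K_def vars_def)
  have "support_part V (f * g) = (\<Sum>W1\<in>Pow K. \<Sum>W2\<in>Pow K.
      support_part V (support_part W1 f * support_part W2 g))"
    by (subst (1) sum_support_part[OF K(1,3), symmetric], subst sum_support_part[OF K(1,4), symmetric])
       (simp add: sum_product support_part_sum)
  also have "\<dots> = (\<Sum>W1\<in>Pow K. \<Sum>W2\<in>Pow K.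
      if W1 \<union> W2 = V then support_part W1 f * support_part W2 g else 0)"
    by (simp only: support_part_mult_support_part)
  also have "\<dots> = (\<Sum>W1\<in>Pow K. \<Sum>W2\<in>Pow V.
      if W1 \<union> W2 = V then support_part W1 f * support_part W2 g else 0)"
    by (intro sum.cong refl sum.mono_neutral_right) (use K in auto)
  also have "\<dots> = (\<Sum>W1\<in>Pow V. \<Sum>W2\<in>Pow V.
      if W1 \<union> W2 = V then support_part W1 f * support_part W2 g else 0)"
    by (intro sum.mono_neutral_right) (use K in \<open>auto intro!: sum.neutral\<close>)
  finally show ?thesis .
qed

lemma monpoly_mult_monpoly: "monpoly a * monpoly b = (monpoly (a + b) :: 'a::comm_ring_1 mpoly)"
  by (simp add: monpoly_def mult_single)

lemma mono_cofactor_mult: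
  fixes f g :: "'a::comm_ring_1 mpoly"
  assumes V: "finite V"
  shows "mono_cofactor V (f * g) = (\<Sum>W1\<in>Pow V. \<Sum>W2\<in>Pow V. if W1 \<union> W2 = V
           then monpoly (mlmon (W1 \<inter> W2)) * (mono_cofactor W1 f * mono_cofactor W2 g) else 0)"
proof -
  have "support_part W1 f * support_part W2 g = monpoly (mlmon V) *
      (monpoly (mlmon (W1 \<inter> W2)) * (mono_cofactor W1 f * mono_cofactor W2 g))"
    if "W1 \<subseteq> V" "W2 \<subseteq> V" "W1 \<union> W2 = V" for W1 W2
  proof -
    have "finite W1" "finite W2" using that V finite_subset by auto
    then have "support_part W1 f * support_part W2 g
        = (monpoly (mlmon W1) * monpoly (mlmon W2)) * (mono_cofactor W1 f * mono_cofactor W2 g)"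
      by (simp add: monpoly_mlmon_mult_mono_cofactor[symmetric] mult_ac)
    also have "\<dots> = monpoly (mlmon V) *
        (monpoly (mlmon (W1 \<inter> W2)) * (mono_cofactor W1 f * mono_cofactor W2 g))"
      using \<open>finite W1\<close> \<open>finite W2\<close> that(3)
      by (simp add: monpoly_mult_monpoly mlmon_add_mlmon flip: mult.assoc)
    finally show ?thesis .
  qed
  then have "monpoly (mlmon V) * mono_cofactor V (f * g) = monpoly (mlmon V) *
      (\<Sum>W1\<in>Pow V. \<Sum>W2\<in>Pow V. if W1 \<union> W2 = V
         then monpoly (mlmon (W1 \<inter> W2)) * (mono_cofactor W1 f * mono_cofactor W2 g) else 0)"
    unfolding monpoly_mlmon_mult_mono_cofactor[OF V] support_part_mult[OF V] sum_distrib_left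
    by (intro sum.cong refl) auto
  then show ?thesis unfolding monpoly_def by (rule single_mult_cancel)
qed

lemma mono_cofactor_eq_0:
  assumes "vars g \<subseteq> X" "\<not> W \<subseteq> X" "finite W"
  shows "mono_cofactor W g = 0"
proof (rule poly_mapping_eqI)
  fix \<nu>
  obtain v where v: "v \<in> W" "v \<notin> X" using assms by auto
  have "v \<in> keys (\<nu> + mlmon W)" using v assms(3) by (simp add: keys_add_nat keys_mlmon)
  then have "\<nu> + mlmon W \<notin> keys g" using keys_subset_vars assms(1) v by blast
  then show "lookup (mono_cofactor W g) \<nu> = lookup 0 \<nu>" by (simp add: lookup_mono_cofactor in_keys_iff)
qed

definition pcm_factor_entry :: "'a::comm_ring_1 mpoly \<Rightarrow> var set \<Rightarrow> var set \<Rightarrow> 'a mpoly" where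
  "pcm_factor_entry g X0 W = (\<Sum>W2\<in>Pow X0. if W \<union> W2 = X0 then monpoly (mlmon (W \<inter> W2)) * mono_cofactor W2 g else 0)"

lemma pcm_factor_entry_eq_0: "\<not> W \<subseteq> X0 \<Longrightarrow> pcm_factor_entry g X0 W = 0"
  unfolding pcm_factor_entry_def by (auto intro!: sum.neutral)

lemma mono_cofactor_mult_one_sided:
  fixes f g :: "'a::comm_ring_1 mpoly"
  assumes g: "vars g \<subseteq> X" and V: "finite V" and U: "finite U" "V \<inter> X \<subseteq> U"
  shows "mono_cofactor V (f * g) = (\<Sum>W\<in>Pow U. pcm_factor_entry g (V \<inter> X) W * mono_cofactor (W \<union> (V - X)) f)"
proof -
  define F where "F W1 W2 = (if W1 \<union> W2 = V
       then monpoly (mlmon (W1 \<inter> W2)) * (mono_cofactor W1 f * mono_cofactor W2 g) else 0)" for W1 W2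
  have "mono_cofactor V (f * g) = (\<Sum>W2\<in>Pow V. \<Sum>W1\<in>Pow V. F W1 W2)"
    unfolding F_def mono_cofactor_mult[OF V] by (rule sum.swap)
  also have "\<dots> = (\<Sum>W2\<in>Pow (V \<inter> X). \<Sum>W1\<in>Pow V. F W1 W2)"
  proof (rule sum.mono_neutral_right)
    show "\<forall>W2\<in>Pow V - Pow (V \<inter> X). (\<Sum>W1\<in>Pow V. F W1 W2) = 0"
    proof
      fix W2 assume "W2 \<in> Pow V - Pow (V \<inter> X)"
      then have "mono_cofactor W2 g = 0" using mono_cofactor_eq_0[OF g] V finite_subset by blast
      then show "(\<Sum>W1\<in>Pow V. F W1 W2) = 0" by (simp add: F_def)
    qed
  qed (use V in auto)
  also have "\<dots> = (\<Sum>W2\<in>Pow (V \<inter> X). \<Sum>W\<in>Pow (V \<inter> X). F (W \<union> (V - X)) W2)"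
    \<comment> \<open>as W2 \<subseteq> X, the condition W1 \<union> W2 = V forces V - X \<subseteq> W1\<close>
  proof (rule sum.cong[OF refl])
    fix W2 assume "W2 \<in> Pow (V \<inter> X)"
    have "inj_on (\<lambda>W. W \<union> (V - X)) (Pow (V \<inter> X))" by (rule inj_onI) blast
    then have "(\<Sum>W\<in>Pow (V \<inter> X). F (W \<union> (V - X)) W2)
        = (\<Sum>W1\<in>(\<lambda>W. W \<union> (V - X)) ` Pow (V \<inter> X). F W1 W2)"
      by (simp add: sum.reindex)
    also have "\<dots> = (\<Sum>W1\<in>Pow V. F W1 W2)"
    proof (rule sum.mono_neutral_left)
      show "\<forall>W1\<in>Pow V - (\<lambda>W. W \<union> (V - X)) ` Pow (V \<inter> X). F W1 W2 = 0"
        using \<open>W2 \<in> Pow (V \<inter> X)\<close> by (auto simp: F_def intro!: image_eqI[of _ _ "_ \<inter> X"])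
    qed (use V in auto)
    finally show "(\<Sum>W1\<in>Pow V. F W1 W2) = (\<Sum>W\<in>Pow (V \<inter> X). F (W \<union> (V - X)) W2)" by (rule sym)
  qed
  also have "\<dots> = (\<Sum>W\<in>Pow (V \<inter> X). pcm_factor_entry g (V \<inter> X) W * mono_cofactor (W \<union> (V - X)) f)"
  proof (subst sum.swap, rule sum.cong[OF refl])
    fix W assume W: "W \<in> Pow (V \<inter> X)"
    have "F (W \<union> (V - X)) W2 = (if W \<union> W2 = V \<inter> X then monpoly (mlmon (W \<inter> W2)) *
        mono_cofactor W2 g * mono_cofactor (W \<union> (V - X)) f else 0)" if "W2 \<in> Pow (V \<inter> X)" for W2
    proof -
      have "(W \<union> (V - X)) \<union> W2 = V \<longleftrightarrow> W \<union> W2 = V \<inter> X" "(W \<union> (V - X)) \<inter> W2 = W \<inter> W2"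
        using W that by blast+
      then show ?thesis by (simp add: F_def mult_ac)
    qed
    then show "(\<Sum>W2\<in>Pow (V \<inter> X). F (W \<union> (V - X)) W2)
        = pcm_factor_entry g (V \<inter> X) W * mono_cofactor (W \<union> (V - X)) f"
      unfolding pcm_factor_entry_def sum_distrib_right by (intro sum.cong refl) simp
  qed
  also have "\<dots> = (\<Sum>W\<in>Pow U. pcm_factor_entry g (V \<inter> X) W * mono_cofactor (W \<union> (V - X)) f)"
    using U by (intro sum.mono_neutral_left) (auto simp: pcm_factor_entry_eq_0)
  finally show ?thesis .
qed

section \<open>Factorisation of the evaluated coefficient matrix\<close>

lemma bij_betw_idx_set: "bij_betw (idx_set m) {..<2^m} (Pow {..<m})"
proof -
  have inj: "inj_on (idx_set m) {..<2^m}"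
  proof (rule inj_onI)
    fix i j :: nat assume "i \<in> {..<2^m}" "j \<in> {..<2^m}" "idx_set m i = idx_set m j"
    then have "take_bit m i = i" "take_bit m j = j" "bit (take_bit m i) n = bit (take_bit m j) n" for n
      unfolding idx_set_def by (auto simp: take_bit_nat_eq_self_iff bit_take_bit_iff set_eq_iff)
    then show "i = j" by (metis bit_eq_iff)
  qed
  moreover have "idx_set m ` {..<2^m} \<subseteq> Pow {..<m}" unfolding idx_set_def by auto
  moreover have "card (idx_set m ` {..<2^m}) = card (Pow {..<m})"
    using card_image[OF inj] by (simp add: card_Pow)
  ultimately show ?thesis unfolding bij_betw_def by (simp add: card_subset_eq)
qed

lemma bij_betw_image_idx_set:
  assumes "inj h"
  shows "bij_betw (\<lambda>k. h ` idx_set m k) {..<2^m} (Pow (h ` {..<m}))"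
proof -
  have "bij_betw h {..<m} (h ` {..<m})"
    by (rule inj_on_imp_bij_betw) (use assms in \<open>auto intro: inj_on_subset\<close>)
  from bij_betw_trans[OF bij_betw_idx_set bij_betw_Pow[OF this]] show ?thesis
    by (simp add: comp_def)
qed

lemma idx_set_subset: "idx_set m i \<subseteq> {..<m}"
  unfolding idx_set_def by auto

lemma finite_idx_set: "finite (idx_set m i)"
  unfolding idx_set_def by auto

lemma index_pcm_eval:
  "i < 2^m \<Longrightarrow> j < 2^m \<Longrightarrow>
    pcm_eval m f S $$ (i, j) = eval S (mono_cofactor (Inl ` idx_set m i \<union> Inr ` idx_set m j) f)"
  by (simp add: pcm_eval_def pcm_entry_eq_mono_cofactor finite_idx_set)

lemma pcm_eval_carrier: "pcm_eval m f S \<in> carrier_mat (2^m) (2^m)"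
  unfolding pcm_eval_def by auto

lemma index_mult_square_mat:
  "A \<in> carrier_mat n n \<Longrightarrow> B \<in> carrier_mat n n \<Longrightarrow> i < n \<Longrightarrow> j < n \<Longrightarrow>
    (A * B) $$ (i, j) = (\<Sum>k<n. A $$ (i, k) * B $$ (k, j))"
  by (simp add: scalar_prod_def lessThan_atLeast0)

lemma pcm_eval_mult_Y:
  fixes f g :: "'a::field mpoly"
  assumes g: "vars g \<subseteq> Yvars m"
  shows "pcm_eval m (f * g) S = mat (2^m) (2^m)
      (\<lambda>(i, k). eval S (pcm_factor_entry g (Inl ` idx_set m i) (Inl ` idx_set m k))) * pcm_eval m f S"
    (is "_ = ?C * _")
proof (rule eq_matI)
  fix i j assume "i < dim_row (?C * pcm_eval m f S)" "j < dim_col (?C * pcm_eval m f S)"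
  then have ij: "i < 2^m" "j < 2^m" by (auto simp: pcm_eval_def)
  let ?V = "Inl ` idx_set m i \<union> Inr ` idx_set m j"
  have V: "?V \<inter> Yvars m = Inl ` idx_set m i" "?V - Yvars m = Inr ` idx_set m j"
    using idx_set_subset[of m i] by (auto simp: Yvars_def)
  have "(?C * pcm_eval m f S) $$ (i, j) = (\<Sum>k<2^m. eval S (pcm_factor_entry g (Inl ` idx_set m i)
      (Inl ` idx_set m k) * mono_cofactor (Inl ` idx_set m k \<union> Inr ` idx_set m j) f))"
    using ij by (subst index_mult_square_mat[where n="2^m"])
      (simp_all add: pcm_eval_carrier index_pcm_eval eval_mult)
  also have "\<dots> = eval S (\<Sum>W\<in>Pow (Yvars m).
      pcm_factor_entry g (Inl ` idx_set m i) W * mono_cofactor (W \<union> Inr ` idx_set m j) f)"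
    unfolding eval_sum Yvars_def
    by (rule sum.reindex_bij_betw[OF bij_betw_image_idx_set]) simp
  also have "\<dots> = eval S (mono_cofactor ?V (f * g))"
    using mono_cofactor_mult_one_sided[OF g, of ?V "Yvars m" f] idx_set_subset[of m i]
    unfolding V by (simp add: image_mono finite_idx_set Yvars_def)
  finally show "pcm_eval m (f * g) S $$ (i, j) = (?C * pcm_eval m f S) $$ (i, j)"
    using ij by (simp add: index_pcm_eval)
qed (auto simp: pcm_eval_def)

lemma pcm_eval_mult_Z:
  fixes f g :: "'a::field mpoly"
  assumes g: "vars g \<subseteq> Zvars m"
  shows "pcm_eval m (f * g) S = pcm_eval m f S * mat (2^m) (2^m)
      (\<lambda>(k, j). eval S (pcm_factor_entry g (Inr ` idx_set m j) (Inr ` idx_set m k)))"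
    (is "_ = _ * ?C")
proof (rule eq_matI)
  fix i j assume "i < dim_row (pcm_eval m f S * ?C)" "j < dim_col (pcm_eval m f S * ?C)"
  then have ij: "i < 2^m" "j < 2^m" by (auto simp: pcm_eval_def)
  let ?V = "Inl ` idx_set m i \<union> Inr ` idx_set m j"
  have V: "?V \<inter> Zvars m = Inr ` idx_set m j" "?V - Zvars m = Inl ` idx_set m i"
    using idx_set_subset[of m j] by (auto simp: Zvars_def)
  have "(pcm_eval m f S * ?C) $$ (i, j) = (\<Sum>k<2^m. eval S (pcm_factor_entry g (Inr ` idx_set m j)
      (Inr ` idx_set m k) * mono_cofactor (Inr ` idx_set m k \<union> Inl ` idx_set m i) f))"
  proof -
    have "Inl ` idx_set m i \<union> Inr ` idx_set m k = Inr ` idx_set m k \<union> Inl ` idx_set m i" for k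
      by (rule Un_commute)
    then show ?thesis using ij by (subst index_mult_square_mat[where n="2^m"])
      (simp_all add: pcm_eval_carrier index_pcm_eval eval_mult mult.commute)
  qed
  also have "\<dots> = eval S (\<Sum>W\<in>Pow (Zvars m).
      pcm_factor_entry g (Inr ` idx_set m j) W * mono_cofactor (W \<union> Inl ` idx_set m i) f)"
    unfolding eval_sum Zvars_def
    by (rule sum.reindex_bij_betw[OF bij_betw_image_idx_set]) simp
  also have "\<dots> = eval S (mono_cofactor ?V (f * g))"
    using mono_cofactor_mult_one_sided[OF g, of ?V "Zvars m" f] idx_set_subset[of m j]
    unfolding V by (simp add: image_mono finite_idx_set Zvars_def)
  finally show "pcm_eval m (f * g) S $$ (i, j) = (pcm_eval m f S * ?C) $$ (i, j)"
    using ij by (simp add: index_pcm_eval)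
qed (auto simp: pcm_eval_def)

lemma maxrank_mono:
  assumes "\<And>S. vec_space.rank (2^m) (pcm_eval m h S) \<le> vec_space.rank (2^m) (pcm_eval m f S)"
  shows "maxrank m h \<le> maxrank m f"
proof -
  let ?r = "\<lambda>h S. vec_space.rank (2^m) (pcm_eval m h S)"
  have fin: "finite (range (?r h'))" for h'
    by (rule finite_subset[of _ "{..2^m}"]) (use vec_space.rank_le_nc[OF pcm_eval_carrier] in auto)
  show ?thesis unfolding maxrank_def
  proof (rule Max.boundedI)
    fix x assume "x \<in> range (?r h)"
    then obtain S where "x = ?r h S" by auto
    also have "\<dots> \<le> ?r f S" by (rule assms)
    also have "\<dots> \<le> Max (range (?r f))" by (rule Max_ge[OF fin]) auto
    finally show "x \<le> Max (range (?r f))" .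
  qed (use fin in auto)
qed

theorem proposition4:
  fixes m :: nat and f g :: "'a::field mpoly"
  assumes "vars f \<subseteq> Yvars m \<union> Zvars m"
    and "vars g \<subseteq> Yvars m \<or> vars g \<subseteq> Zvars m"
  shows "maxrank m (f * g) \<le> maxrank m f"
proof (rule maxrank_mono)
  fix S
  from assms(2) show "vec_space.rank (2^m) (pcm_eval m (f * g) S) \<le> vec_space.rank (2^m) (pcm_eval m f S)"
  proof
    assume "vars g \<subseteq> Yvars m"
    then show ?thesis
      by (subst pcm_eval_mult_Y) (auto intro!: vec_space.rank_mult_le_right pcm_eval_carrier)
  next
    assume "vars g \<subseteq> Zvars m"
    then show ?thesis
      by (subst pcm_eval_mult_Z) (auto intro!: vec_space.rank_mult_le_left pcm_eval_carrier)
  qed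
qed

end
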